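(* Let $\mathcal{X}$ be a finite set, let $P_X$ be a pmf on $\mathcal{X}$ with $P_X(x)>0$ for all $x$, and let $R_X\neq P_X$ be a pmf on $\mathcal{X}$. Write $R_X=P_X+J_X=P_X+\mathrm{diag}(\sqrt{P_X})K_X$, i.e. $J_X=R_X-P_X$ and $K_X(x)=J_X(x)/\sqrt{P_X(x)}$. Then $$D(R_X\|P_X)\ge \frac{\|K_X\|_2^2\,\|J_X\|_1}{2\max_{x\in\mathcal{X}}\left|\frac{J_X(x)}{P_X(x)}\right|}.$$
   Context: $D(R_X\|P_X)=\sum_x R_X(x)\log(R_X(x)/P_X(x))$ is the KL divergence (natural log). $\mathrm{diag}(\sqrt{P_X})$ is the diagonal matrix with entries $\sqrt{P_X(x)}$. $\|\cdot\|_p$ denotes the $\ell^p$-norm. *)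

theory Defs
  imports "HOL-Probability.Probability"
begin

definition KL_div :: "'a::finite pmf \<Rightarrow> 'a pmf \<Rightarrow> real" where
  "KL_div R P = (\<Sum>x\<in>UNIV. if pmf R x = 0 then 0 else pmf R x * ln (pmf R x / pmf P x))"

end

theory Submission
  imports Defs
begin

text \<open>Write \<open>R = P (1 + t)\<close> with \<open>t = J / P\<close>. Since \<open>\<Sum> J = 0\<close>, the divergence is
  \<open>\<Sum> P \<phi>(t)\<close> with \<open>\<phi>(t) = (1+t) ln (1+t) - t\<close>, and \<open>\<phi>(t) \<ge> 3t\<^sup>2/(2(3+t))\<close>.
  With \<open>M = max |t|\<close>, \<open>S = \<Sum> P|t| = \<Sum>|J|\<close> and \<open>Q = \<Sum> P t\<^sup>2 = \<Sum> K\<^sup>2\<close>, it remains to show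
  \<open>\<Sum> P 3t\<^sup>2/(2(3+t)) \<ge> n Q\<close> for \<open>n = S/(2M) \<le> 1/2\<close>. If \<open>n \<le> 3/(2(3+M))\<close> this holds
  termwise. Otherwise one bounds \<open>3t\<^sup>2/(2(3+t))\<close> from below by \<open>n t\<^sup>2\<close> plus a combination of
  \<open>1\<close>, \<open>max t 0\<close> and \<open>max (-t) 0\<close>; the expectations of these are \<open>1\<close>, \<open>S/2\<close>, \<open>S/2\<close>, and
  for the choice \<open>l = M n/(1-n)\<close> of the free parameter the remaining constant is nonnegative.\<close>

definition kl_integrand_lb :: "real \<Rightarrow> real" where
  "kl_integrand_lb t = 3 * t\<^sup>2 / (2 * (3 + t))"

lemma ln_minus_rational_has_derivative:
  fixes x :: real
  assumes "x > 0"
  shows "((\<lambda>x. ln x - 3 * (x - 1) * (x + 5) / (2 * (x + 2)\<^sup>2))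
           has_real_derivative (1 / x - 27 / (x + 2) ^ 3)) (at x)"
proof -
  have "((\<lambda>x. ln x - 3 * (x - 1) * (x + 5) / (2 * (x + 2)\<^sup>2)) has_real_derivative
      (1 / x - ((3 * (x + 5) + 3 * (x - 1)) * (2 * (x + 2)\<^sup>2)
               - 3 * (x - 1) * (x + 5) * (2 * (2 * (x + 2)))) / (2 * (x + 2)\<^sup>2)\<^sup>2)) (at x)"
    using assms by (auto intro!: derivative_eq_intros simp: power2_eq_square)
  moreover have "(1 / x - ((3 * (x + 5) + 3 * (x - 1)) * (2 * (x + 2)\<^sup>2)
               - 3 * (x - 1) * (x + 5) * (2 * (2 * (x + 2)))) / (2 * (x + 2)\<^sup>2)\<^sup>2)
      = 1 / x - 27 / (x + 2) ^ 3"
    using assms by (simp add: field_simps add_pos_pos) algebra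
  ultimately show ?thesis by simp
qed

lemma inverse_ge_27_div_cube:
  fixes x :: real
  assumes "x > 0"
  shows "27 / (x + 2) ^ 3 \<le> 1 / x"
proof -
  have "(x + 2) ^ 3 - 27 * x = (x - 1)\<^sup>2 * (x + 8)" by algebra
  also have "\<dots> \<ge> 0" using assms by simp
  finally show ?thesis using assms by (simp add: field_simps)
qed

lemma ln_minus_rational_sign:
  fixes x :: real
  assumes "x > 0"
  defines "f \<equiv> \<lambda>x. ln x - 3 * (x - 1) * (x + 5) / (2 * (x + 2)\<^sup>2)"
  shows "1 \<le> x \<Longrightarrow> 0 \<le> f x" and "x \<le> 1 \<Longrightarrow> f x \<le> 0"
proof -
  have f': "(f has_real_derivative (1 / y - 27 / (y + 2) ^ 3)) (at y)" if "y > 0" for y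
    unfolding f_def using ln_minus_rational_has_derivative[OF that] .
  have f1: "f 1 = 0" by (simp add: f_def)
  show "0 \<le> f x" if "1 \<le> x"
    using deriv_nonneg_imp_mono[of 1 x f, OF f'] inverse_ge_27_div_cube that f1 by force
  show "f x \<le> 0" if "x \<le> 1"
    using deriv_nonneg_imp_mono[of x 1 f, OF f'] inverse_ge_27_div_cube that assms f1 by force
qed

lemma xlnx_minus_rational_has_derivative:
  fixes x :: real
  assumes "x > 0"
  shows "((\<lambda>x. x * ln x - x + 1 - 3 * (x - 1)\<^sup>2 / (2 * (x + 2))) has_real_derivative
           (ln x - 3 * (x - 1) * (x + 5) / (2 * (x + 2)\<^sup>2))) (at x)"
proof -
  have "((\<lambda>x. x * ln x - x + 1 - 3 * (x - 1)\<^sup>2 / (2 * (x + 2))) has_real_derivative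
      (ln x + x * (1 / x) - 1 - ((3 * (2 * (x - 1))) * (2 * (x + 2)) - 3 * (x - 1)\<^sup>2 * 2)
          / (2 * (x + 2))\<^sup>2)) (at x)"
    using assms by (auto intro!: derivative_eq_intros simp: power2_eq_square)
  moreover have "ln x + x * (1 / x) - 1 - ((3 * (2 * (x - 1))) * (2 * (x + 2)) - 3 * (x - 1)\<^sup>2 * 2)
          / (2 * (x + 2))\<^sup>2 = ln x - 3 * (x - 1) * (x + 5) / (2 * (x + 2)\<^sup>2)"
    using assms by (simp add: field_simps add_pos_pos) algebra
  ultimately show ?thesis by metis
qed

lemma xlnx_minus_x_plus_1_ge:
  fixes x :: real
  assumes "x > 0"
  shows "3 * (x - 1)\<^sup>2 / (2 * (x + 2)) \<le> x * ln x - x + 1"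
proof -
  define h where "h = (\<lambda>x::real. x * ln x - x + 1 - 3 * (x - 1)\<^sup>2 / (2 * (x + 2)))"
  define h' where "h' = (\<lambda>x::real. ln x - 3 * (x - 1) * (x + 5) / (2 * (x + 2)\<^sup>2))"
  have deriv: "(h has_real_derivative h' y) (at y)" if "y > 0" for y
    unfolding h_def h'_def by (rule xlnx_minus_rational_has_derivative[OF that])
  have "h 1 \<le> h x"
  proof (cases "1 \<le> x")
    case True
    then show ?thesis
      using deriv_nonneg_imp_mono[of 1 x h h'] deriv ln_minus_rational_sign(1)
      unfolding h'_def by force
  next
    case False
    then show ?thesis
      using deriv_nonpos_imp_antimono[of x 1 h h'] deriv ln_minus_rational_sign(2) assms
      unfolding h'_def by force
  qed
  then show ?thesis by (simp add: h_def)
qed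

lemma kl_term_ge_kl_integrand_lb:
  fixes p r :: real
  assumes p: "p > 0" and r: "r \<ge> 0"
  shows "p * kl_integrand_lb (r / p - 1) \<le> (if r = 0 then 0 else r * ln (r / p)) - (r - p)"
proof (cases "r = 0")
  case True
  then show ?thesis using p by (simp add: kl_integrand_lb_def)
next
  case False
  define y where "y = r / p"
  have "y > 0" using False p r by (simp add: y_def)
  have r_eq: "r = p * y" using p by (simp add: y_def)
  have "p * kl_integrand_lb (r / p - 1) = p * (3 * (y - 1)\<^sup>2 / (2 * (y + 2)))"
    by (simp add: kl_integrand_lb_def y_def add.commute)
  also have "\<dots> \<le> p * (y * ln y - y + 1)"
    by (rule mult_left_mono[OF xlnx_minus_x_plus_1_ge[OF \<open>y > 0\<close>]]) (use p in simp)
  also have "\<dots> = r * ln (r / p) - (r - p)"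
    by (simp add: r_eq y_def[symmetric] algebra_simps)
  finally show ?thesis using False by simp
qed

lemma KL_div_ge_sum_kl_integrand_lb:
  fixes P R :: "'a::finite pmf"
  assumes "\<And>x. pmf P x > 0"
  shows "(\<Sum>x\<in>UNIV. pmf P x * kl_integrand_lb (pmf R x / pmf P x - 1)) \<le> KL_div R P"
proof -
  have "(\<Sum>x\<in>UNIV. pmf R x - pmf P x) = 0"
    by (simp add: sum_subtractf sum_pmf_eq_1)
  then have "KL_div R P = (\<Sum>x\<in>UNIV.
      (if pmf R x = 0 then 0 else pmf R x * ln (pmf R x / pmf P x)) - (pmf R x - pmf P x))"
    unfolding KL_div_def by (simp add: sum_subtractf)
  then show ?thesis
    by (simp add: sum_mono kl_term_ge_kl_integrand_lb assms)
qed

lemma sum_mult_pos_part_eq_half: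
  fixes p t :: "'a \<Rightarrow> real"
  assumes "(\<Sum>x\<in>A. p x * t x) = 0"
  shows "(\<Sum>x\<in>A. p x * max (t x) 0) = (\<Sum>x\<in>A. p x * \<bar>t x\<bar>) / 2"
proof -
  have "(\<Sum>x\<in>A. p x * max (t x) 0) = (\<Sum>x\<in>A. (p x * t x + p x * \<bar>t x\<bar>) / 2)"
    by (rule sum.cong) (auto simp: max_def)
  then show ?thesis using assms by (simp add: sum_divide_distrib[symmetric] sum.distrib)
qed

lemma sum_mult_neg_part_eq_half:
  fixes p t :: "'a \<Rightarrow> real"
  assumes "(\<Sum>x\<in>A. p x * t x) = 0"
  shows "(\<Sum>x\<in>A. p x * max (- t x) 0) = (\<Sum>x\<in>A. p x * \<bar>t x\<bar>) / 2"
  using sum_mult_pos_part_eq_half[of p "\<lambda>x. - t x" A] assms by (simp add: sum_negf)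

lemma quad_le_kl_integrand_lb:
  fixes n M t :: real
  assumes "-1 \<le> t" "t \<le> M" "n \<le> 1/2" "n \<le> 3 / (2 * (3 + M))"
  shows "n * t\<^sup>2 \<le> kl_integrand_lb t"
proof -
  have "n \<le> 3 / (2 * (3 + t))"
  proof (cases "t > 0")
    case True
    then have "3 / (2 * (3 + M)) \<le> 3 / (2 * (3 + t))" using assms by (simp add: frac_le)
    then show ?thesis using assms by simp
  next
    case False
    moreover have "0 < 3 + t" using assms by simp
    ultimately have "1/2 \<le> 3 / (2 * (3 + t))" by (simp add: field_simps)
    then show ?thesis using assms by linarith
  qed
  then have "n * t\<^sup>2 \<le> 3 / (2 * (3 + t)) * t\<^sup>2" by (rule mult_right_mono) simp
  then show ?thesis by (simp add: kl_integrand_lb_def)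
qed

text \<open>The certificate for the case \<open>n > 3/(2(3+M))\<close>: for \<open>t > 0\<close> the \<open>l\<close>-terms are
  dropped, for \<open>t \<le> 0\<close> the cubic bound \<open>u\<^sup>2/2 + u\<^sup>3/6\<close> (\<open>u = -t\<close>) is estimated by its
  tangents at \<open>u = l\<close>.\<close>

lemma kl_integrand_lb_ge_certificate:
  fixes t M n l :: real
  assumes t1: "t \<ge> -1" and tM: "\<bar>t\<bar> \<le> M" and M: "M > 0" and n1: "n \<le> 1/2"
    and bn: "3 / (2 * (3 + M)) < n" and l: "l \<ge> 0"
  shows "n * t\<^sup>2 + ((1 - 2*n) * l + l\<^sup>2/2) * max (-t) 0
          - ((1/2 - n) * l\<^sup>2 + l^3/3) * (1 - max t 0 / M)
          - (n - 3 / (2 * (3 + M))) * M * max t 0 \<le> kl_integrand_lb t"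
proof (cases "t > 0")
  case True
  have "0 \<le> (1/2 - n) * l\<^sup>2 + l^3/3" "0 \<le> 1 - t / M" using n1 l tM M True by auto
  then have drop: "0 \<le> ((1/2 - n) * l\<^sup>2 + l^3/3) * (1 - max t 0 / M)" using True by simp
  have "3 / (2 * (3 + M)) \<le> 3 / (2 * (3 + t))" using True tM M by (simp add: frac_le)
  then have "t\<^sup>2 * (3 / (2 * (3 + M))) \<le> t\<^sup>2 * (3 / (2 * (3 + t)))" by (rule mult_left_mono) simp
  then have quad: "n * t\<^sup>2 - (n - 3 / (2 * (3 + M))) * t\<^sup>2 \<le> kl_integrand_lb t"
    by (simp add: kl_integrand_lb_def algebra_simps)
  have "t\<^sup>2 \<le> M * t" using True tM by (simp add: power2_eq_square)
  then have "(n - 3 / (2 * (3 + M))) * t\<^sup>2 \<le> (n - 3 / (2 * (3 + M))) * (M * t)"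
    using bn by (simp add: mult_left_mono)
  then show ?thesis using quad drop True by (simp add: algebra_simps)
next
  case False
  define u where "u = -t"
  have u0: "u \<ge> 0" and u1: "u \<le> 1" using False t1 by (auto simp: u_def)
  have cubic: "u\<^sup>2/2 + u^3/6 \<le> kl_integrand_lb t"
  proof -
    have "(u\<^sup>2/2 + u^3/6) * (2 * (3 - u)) = 3 * u\<^sup>2 - u^4/3" by algebra
    also have "\<dots> \<le> 3 * u\<^sup>2" by simp
    finally have "u\<^sup>2/2 + u^3/6 \<le> 3 * u\<^sup>2 / (2 * (3 - u))" using u1 by (simp add: field_simps)
    then show ?thesis by (simp add: kl_integrand_lb_def u_def)
  qed
  have "u\<^sup>2 - (2 * l * u - l\<^sup>2) = (u - l)\<^sup>2" by algebra
  then have sq: "(1/2 - n) * (2 * l * u - l\<^sup>2) \<le> (1/2 - n) * u\<^sup>2"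
    using n1 by (intro mult_left_mono) (auto simp: algebra_simps)
  have "u^3 - (3 * l\<^sup>2 * u - 2 * l^3) = (u - l)\<^sup>2 * (u + 2 * l)" by algebra
  then have cu: "3 * l\<^sup>2 * u - 2 * l^3 \<le> u^3" using u0 l by (smt (verit) mult_nonneg_nonneg zero_le_power2)
  from sq cu have "((1 - 2*n) * l + l\<^sup>2/2) * u - ((1/2 - n) * l\<^sup>2 + l^3/3) \<le> u\<^sup>2/2 + u^3/6 - n * u\<^sup>2"
    by (simp add: algebra_simps power2_eq_square power3_eq_cube)
  moreover have "max (- t) 0 = u" "max t 0 = 0" using False by (auto simp: u_def)
  ultimately show ?thesis using cubic by (simp add: u_def power2_eq_square)
qed

lemma certificate_constant_nonneg:
  fixes M n :: real
  assumes M: "M > 0" and n0: "0 < n" and n1: "n \<le> 1/2"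
  defines "l \<equiv> M * n / (1 - n)"
  shows "0 \<le> ((1 - 2*n) * l + l\<^sup>2/2) * (n * M) - ((1/2 - n) * l\<^sup>2 + l^3/3) * (1 - n)
              - (n - 3 / (2 * (3 + M))) * M * (n * M)"
proof -
  define b where "b = 3 / (2 * (3 + M))"
  define X where "X = (1/2 - n) * l + l\<^sup>2/6 - (n - b) * M"
  have hl: "l * (1 - n) = M * n" unfolding l_def using n1 by simp
  have hb: "b * (2 * (3 + M)) = 3" unfolding b_def using M by (simp add: field_simps)
  have factor: "((1 - 2*n) * l + l\<^sup>2/2) * (n * M) - ((1/2 - n) * l\<^sup>2 + l^3/3) * (1 - n)
      - (n - b) * M * (n * M) = (n * M) * X"
    unfolding X_def using hl by algebra
  have "6 * (1 - n)\<^sup>2 * (3 + M) * X = M * ((n * M - 3 * (1 - 2*n) / 2)\<^sup>2 + 9 * (1 - 2*n) * (3/4 - n/2))"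
    unfolding X_def using hl hb by algebra
  moreover have "0 \<le> (n * M - 3 * (1 - 2*n) / 2)\<^sup>2 + 9 * (1 - 2*n) * (3/4 - n/2)"
    using n1 by (intro add_nonneg_nonneg) auto
  ultimately have "0 \<le> 6 * (1 - n)\<^sup>2 * (3 + M) * X" using M by simp
  moreover have "0 < 6 * (1 - n)\<^sup>2 * (3 + M)" using n1 M by simp
  ultimately have "0 \<le> X" by (simp add: zero_le_mult_iff)
  then show ?thesis using factor n0 M unfolding b_def by simp
qed

lemma weighted_kl_integrand_lb_ge_large_coeff:
  fixes p t :: "'a::finite \<Rightarrow> real" and M n :: real
  assumes p: "\<And>x. p x \<ge> 0" and p1: "(\<Sum>x\<in>UNIV. p x) = 1" and t0: "(\<Sum>x\<in>UNIV. p x * t x) = 0"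
    and t1: "\<And>x. t x \<ge> -1" and tM: "\<And>x. \<bar>t x\<bar> \<le> M" and M: "M > 0"
    and n: "n = (\<Sum>x\<in>UNIV. p x * \<bar>t x\<bar>) / (2 * M)" and n1: "n \<le> 1/2"
    and bn: "3 / (2 * (3 + M)) < n"
  shows "(\<Sum>x\<in>UNIV. p x * (n * (t x)\<^sup>2)) \<le> (\<Sum>x\<in>UNIV. p x * kl_integrand_lb (t x))"
proof -
  have n0: "0 < n" using bn M by (smt (verit) divide_pos_pos)
  define l where "l = M * n / (1 - n)"
  have l0: "l \<ge> 0" unfolding l_def using M n0 n1 by simp
  define a where "a = (1 - 2*n) * l + l\<^sup>2/2"
  define g where "g = (1/2 - n) * l\<^sup>2 + l^3/3"
  define c where "c = (n - 3 / (2 * (3 + M))) * M"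
  define L where "L = (\<lambda>x. n * (t x)\<^sup>2 + a * max (- t x) 0 - g * (1 - max (t x) 0 / M)
                              - c * max (t x) 0)"
  have pos: "(\<Sum>x\<in>UNIV. p x * max (t x) 0) = n * M"
    and neg: "(\<Sum>x\<in>UNIV. p x * max (- t x) 0) = n * M"
    using sum_mult_pos_part_eq_half[OF t0] sum_mult_neg_part_eq_half[OF t0] n M by auto
  have "(\<Sum>x\<in>UNIV. p x * L x) = (\<Sum>x\<in>UNIV. p x * (n * (t x)\<^sup>2))
      + a * (\<Sum>x\<in>UNIV. p x * max (- t x) 0) - g * (\<Sum>x\<in>UNIV. p x)
      + (g / M - c) * (\<Sum>x\<in>UNIV. p x * max (t x) 0)"
    unfolding L_def
    by (simp add: algebra_simps sum.distrib sum_subtractf sum_distrib_left)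
  also have "\<dots> = (\<Sum>x\<in>UNIV. p x * (n * (t x)\<^sup>2)) + (a * (n * M) - g * (1 - n) - c * (n * M))"
    unfolding pos neg p1 using M by (simp add: field_simps)
  finally have "(\<Sum>x\<in>UNIV. p x * (n * (t x)\<^sup>2)) \<le> (\<Sum>x\<in>UNIV. p x * L x)"
    using certificate_constant_nonneg[OF M n0 n1]
    unfolding a_def g_def c_def l_def by (simp add: algebra_simps)
  also have "\<dots> \<le> (\<Sum>x\<in>UNIV. p x * kl_integrand_lb (t x))"
    unfolding L_def a_def g_def c_def
    by (intro sum_mono mult_left_mono p kl_integrand_lb_ge_certificate[OF t1 tM M n1 bn l0])
  finally show ?thesis .
qed

lemma weighted_kl_integrand_lb_ge:
  fixes p t :: "'a::finite \<Rightarrow> real" and M :: real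
  assumes p: "\<And>x. p x \<ge> 0" and p1: "(\<Sum>x\<in>UNIV. p x) = 1" and t0: "(\<Sum>x\<in>UNIV. p x * t x) = 0"
    and t1: "\<And>x. t x \<ge> -1" and tM: "\<And>x. \<bar>t x\<bar> \<le> M" and M: "M > 0"
  shows "(\<Sum>x\<in>UNIV. p x * (t x)\<^sup>2) * (\<Sum>x\<in>UNIV. p x * \<bar>t x\<bar>) / (2 * M)
           \<le> (\<Sum>x\<in>UNIV. p x * kl_integrand_lb (t x))"
proof -
  define S where "S = (\<Sum>x\<in>UNIV. p x * \<bar>t x\<bar>)"
  define n where "n = S / (2 * M)"
  have "S \<le> (\<Sum>x\<in>UNIV. p x * M)"
    unfolding S_def by (intro sum_mono mult_left_mono p tM)
  also have "\<dots> = M" using p1 by (simp add: sum_distrib_right[symmetric])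
  finally have n1: "n \<le> 1/2" using M by (simp add: n_def field_simps)
  have "(\<Sum>x\<in>UNIV. p x * (n * (t x)\<^sup>2)) \<le> (\<Sum>x\<in>UNIV. p x * kl_integrand_lb (t x))"
  proof (cases "n \<le> 3 / (2 * (3 + M))")
    case True
    have "t x \<le> M" for x using tM[of x] by simp
    then show ?thesis
      using quad_le_kl_integrand_lb[OF t1 _ n1 True] by (intro sum_mono mult_left_mono p) auto
  next
    case False
    then show ?thesis
      using weighted_kl_integrand_lb_ge_large_coeff[OF p p1 t0 t1 tM M _ n1] n_def S_def by simp
  qed
  then show ?thesis
    by (simp add: n_def S_def sum_distrib_left sum_distrib_right sum_divide_distrib algebra_simps)
qed

theorem lemma1:
  fixes P R :: "'a::finite pmf"
  assumes "\<And>x. pmf P x > 0"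
    and "R \<noteq> P"
  defines "J \<equiv> (\<lambda>x. pmf R x - pmf P x)"
    and "K \<equiv> (\<lambda>x. (pmf R x - pmf P x) / sqrt (pmf P x))"
  shows "KL_div R P \<ge>
    ((\<Sum>x\<in>UNIV. (K x)\<^sup>2) * (\<Sum>x\<in>UNIV. \<bar>J x\<bar>)) /
      (2 * (MAX x\<in>UNIV. \<bar>J x / pmf P x\<bar>))"
proof -
  note p = assms(1)
  define t where "t = (\<lambda>x. J x / pmf P x)"
  define M where "M = (MAX x\<in>UNIV. \<bar>t x\<bar>)"
  have Pt: "pmf P x * t x = J x" for x using p[of x] by (simp add: t_def)
  have t0: "(\<Sum>x\<in>UNIV. pmf P x * t x) = 0"
    by (simp add: Pt J_def sum_subtractf sum_pmf_eq_1)
  have t1: "t x \<ge> -1" for x using p[of x] by (simp add: t_def J_def field_simps)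
  have tM: "\<bar>t x\<bar> \<le> M" for x unfolding M_def by (rule Max_ge) auto
  obtain x0 where "pmf R x0 \<noteq> pmf P x0" using assms(2) pmf_eq_iff by metis
  then have "0 < \<bar>t x0\<bar>" using p[of x0] by (simp add: t_def J_def)
  then have "0 < M" using tM[of x0] by simp
  have K2: "(K x)\<^sup>2 = pmf P x * (t x)\<^sup>2" for x
    using p[of x] by (simp add: K_def t_def J_def power_divide power2_eq_square)
  have J_abs: "\<bar>J x\<bar> = pmf P x * \<bar>t x\<bar>" for x
    using Pt[of x] p[of x] by (metis abs_mult abs_of_pos)
  have "t x = pmf R x / pmf P x - 1" for x
    using p[of x] by (simp add: t_def J_def field_simps)
  then have "(\<Sum>x\<in>UNIV. pmf P x * kl_integrand_lb (t x)) \<le> KL_div R P"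
    using KL_div_ge_sum_kl_integrand_lb[OF p, of R] by simp
  moreover have "(\<Sum>x\<in>UNIV. (K x)\<^sup>2) * (\<Sum>x\<in>UNIV. \<bar>J x\<bar>) / (2 * M)
      \<le> (\<Sum>x\<in>UNIV. pmf P x * kl_integrand_lb (t x))"
    unfolding K2 J_abs
    using weighted_kl_integrand_lb_ge[OF _ sum_pmf_eq_1 t0 t1 tM \<open>0 < M\<close>] by simp
  ultimately show ?thesis unfolding M_def t_def by linarith
qed

end
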